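(* Let $G$ be an oriented graph on $[n]$ with $|\mathcal{P}(G)|\ge 2$. Then there exist $\sigma,\rho\in\mathcal{P}(G)$ such that \[d_\ell(\sigma,\rho)=\max_{1\le i\le n}\{\,n-|R(i)|-|R^{-1}(i)|-1\,\}.\]
   Context: Write a permutation $\sigma\in S_n$ as $\sigma=\sigma_1\cdots\sigma_n$. A permutation $\sigma$ satisfies an oriented graph $G=([n],E)$ if $\sigma_u>\sigma_v$ for every oriented edge $u\to v\in E$; $\mathcal{P}(G)$ is the set of permutations satisfying $G$. Write $u\rightsquigarrow v$ if there is an oriented path from $u$ to $v$ in $G$. For a vertex $v$, $R(v)=\{u\in[n]\setminus\{v\}: v\rightsquigarrow u\}$ and $R^{-1}(v)=\{u\in[n]\setminus\{v\}: u\rightsquigarrow v\}$. The $\ell_\infty$-metric is $d_\ell(\sigma,\rho)=\max_{1\le i\le n}|\sigma_i-\rho_i|$. *)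

theory Defs
  imports "HOL-Combinatorics.Permutations"
begin

definition oriented_graph :: "nat \<Rightarrow> (nat \<times> nat) set \<Rightarrow> bool" where
  "oriented_graph n E \<longleftrightarrow> E \<subseteq> {1..n} \<times> {1..n}
     \<and> (\<forall>u v. (u, v) \<in> E \<longrightarrow> u \<noteq> v \<and> (v, u) \<notin> E)"

text \<open>Permutations of [n] are functions permuting {1..n} (identity outside);
  sigma i is the i-th entry sigma_i.\<close>
definition satisfying_perms :: "nat \<Rightarrow> (nat \<times> nat) set \<Rightarrow> (nat \<Rightarrow> nat) set" where
  "satisfying_perms n E = {\<sigma>. \<sigma> permutes {1..n} \<and> (\<forall>(u, v) \<in> E. \<sigma> u > \<sigma> v)}"

definition reach :: "nat \<Rightarrow> (nat \<times> nat) set \<Rightarrow> nat \<Rightarrow> nat set" where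
  "reach n E v = {u \<in> {1..n} - {v}. (v, u) \<in> E\<^sup>+}"

definition reach_inv :: "nat \<Rightarrow> (nat \<times> nat) set \<Rightarrow> nat \<Rightarrow> nat set" where
  "reach_inv n E v = {u \<in> {1..n} - {v}. (u, v) \<in> E\<^sup>+}"

definition d_linf :: "nat \<Rightarrow> (nat \<Rightarrow> nat) \<Rightarrow> (nat \<Rightarrow> nat) \<Rightarrow> int" where
  "d_linf n \<sigma> \<rho> = Max ((\<lambda>i. \<bar>int (\<sigma> i) - int (\<rho> i)\<bar>) ` {1..n})"

end

theory Submission
  imports Defs
begin

(* In every \<sigma> \<in> P(G) the entry \<sigma> i lies above the |R(i)| entries of the vertices reachable
   from i and below the |R^-1(i)| entries of the vertices reaching i, so it stays in an interval
   of length slack i = n - |R(i)| - |R^-1(i)| - 1, and no two permutations of P(G) are farther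
   apart than the maximal slack. Both ends of the interval are attained: a vertex set closed
   under out-edges can be sent to the lowest values by some \<sigma> \<in> P(G), and {i} \<union> R(i) as well
   as the complement of {i} \<union> R^-1(i) are such sets. Taking i with maximal slack and \<sigma>, \<rho>
   placing i at the two ends of its interval realises the maximum. *)

definition slack :: "nat \<Rightarrow> (nat \<times> nat) set \<Rightarrow> nat \<Rightarrow> int" where
  "slack n E i = int n - int (card (reach n E i)) - int (card (reach_inv n E i)) - 1"

lemma finite_acyclic_ex_source:
  assumes "finite S" "S \<noteq> {}" "acyclic r"
  shows "\<exists>m\<in>S. \<forall>u\<in>S. (u, m) \<notin> r"
proof -
  have "wf (r \<inter> S \<times> S)"
    using assms by (intro finite_acyclic_wf) (auto intro: acyclic_subset)
  then obtain m where "m \<in> S" "\<And>u. (u, m) \<in> r \<inter> S \<times> S \<Longrightarrow> u \<notin> S"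
    using assms(2) wfE_min' by metis
  then show ?thesis
    by blast
qed

lemma acyclic_linear_extension:
  assumes "finite S" "acyclic r"
  shows "\<exists>f. bij_betw f S {k+1..k + card S} \<and>
    (\<forall>u\<in>S. \<forall>v\<in>S. (u, v) \<in> r \<longrightarrow> f v < f u)"
  using assms
proof (induction "card S" arbitrary: S)
  case 0
  then show ?case by (auto simp: bij_betw_def)
next
  case (Suc m S)
  then obtain m0 where m0: "m0 \<in> S" "\<forall>u\<in>S. (u, m0) \<notin> r"
    using finite_acyclic_ex_source by (metis card.empty nat.distinct(1))
  let ?S = "S - {m0}"
  have card_S: "card S = Suc m" "card ?S = m"
    using Suc.hyps(2) m0(1) by simp_all
  then obtain f where f: "bij_betw f ?S {k+1..k + m}"
      "\<forall>u\<in>?S. \<forall>v\<in>?S. (u, v) \<in> r \<longrightarrow> f v < f u"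
    using Suc.hyps(1) Suc.prems by (metis finite_Diff)
  define g where "g = f(m0 := k + card S)"
  have "bij_betw g ?S {k+1..k + m}"
    using f(1) by (rule bij_betw_cong[THEN iffD1, rotated]) (auto simp: g_def)
  then have "bij_betw g (?S \<union> {m0}) ({k+1..k + m} \<union> {g m0})"
    using notIn_Un_bij_betw3[of m0 ?S g] card_S by (auto simp: g_def)
  moreover have "?S \<union> {m0} = S" "{k+1..k + m} \<union> {g m0} = {k+1..k + card S}"
    using m0 card_S by (auto simp: g_def)
  ultimately have "bij_betw g S {k+1..k + card S}"
    by simp
  moreover have "g v < g u" if "u \<in> S" "v \<in> S" "(u, v) \<in> r" for u v
  proof -
    have "v \<noteq> m0"
      using that m0 by blast
    then have "f v \<le> k + m"
      using that(2) f(1) bij_betwE by fastforce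
    with \<open>v \<noteq> m0\<close> show ?thesis
      using that f(2) card_S by (cases "u = m0") (auto simp: g_def)
  qed
  ultimately show ?case by blast
qed

lemma satisfying_perm_less_trancl:
  assumes "\<sigma> \<in> satisfying_perms n E" "(u, v) \<in> E\<^sup>+"
  shows "\<sigma> v < \<sigma> u"
  using assms(2)
proof (induction rule: trancl_induct)
  case (base y)
  then show ?case using assms(1) by (auto simp: satisfying_perms_def)
next
  case (step y z)
  then show ?case using assms(1) by (fastforce simp: satisfying_perms_def)
qed

lemma satisfying_perm_imp_acyclic:
  assumes "\<sigma> \<in> satisfying_perms n E"
  shows "acyclic E"
  using satisfying_perm_less_trancl[OF assms] by (auto simp: acyclic_def)

lemma satisfying_perm_reach_bounds:
  assumes \<sigma>: "\<sigma> \<in> satisfying_perms n E" and j: "j \<in> {1..n}"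
  shows "card (reach n E j) < \<sigma> j" "\<sigma> j + card (reach_inv n E j) \<le> n"
proof -
  have perm: "\<sigma> permutes {1..n}"
    using \<sigma> by (simp add: satisfying_perms_def)
  have inj: "inj_on \<sigma> A" for A
    using permutes_inj[OF perm] by (simp add: inj_on_def)
  have range: "\<sigma> x \<in> {1..n}" if "x \<in> {1..n}" for x
    using that by (simp only: permutes_in_image[OF perm])
  have "\<sigma> ` reach n E j \<subseteq> {1..<\<sigma> j}"
    using range satisfying_perm_less_trancl[OF \<sigma>] by (fastforce simp: reach_def)
  then have "card (\<sigma> ` reach n E j) \<le> card {1..<\<sigma> j}"
    by (intro card_mono) auto
  then have "card (reach n E j) \<le> \<sigma> j - 1"
    by (simp add: card_image[OF inj])
  then show "card (reach n E j) < \<sigma> j"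
    using range[OF j] by auto
  have "\<sigma> ` reach_inv n E j \<subseteq> {\<sigma> j<..n}"
    using range satisfying_perm_less_trancl[OF \<sigma>] by (fastforce simp: reach_inv_def)
  then have "card (\<sigma> ` reach_inv n E j) \<le> card {\<sigma> j<..n}"
    by (intro card_mono) auto
  then have "card (reach_inv n E j) \<le> n - \<sigma> j"
    by (simp add: card_image[OF inj])
  then show "\<sigma> j + card (reach_inv n E j) \<le> n"
    using range[OF j] by auto
qed

lemma satisfying_perms_position_diff_le:
  assumes "\<sigma> \<in> satisfying_perms n E" "\<rho> \<in> satisfying_perms n E" "j \<in> {1..n}"
  shows "\<bar>int (\<sigma> j) - int (\<rho> j)\<bar> \<le> slack n E j"
proof -
  have "card (reach n E j) < \<sigma> j" "\<sigma> j + card (reach_inv n E j) \<le> n"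
    "card (reach n E j) < \<rho> j" "\<rho> j + card (reach_inv n E j) \<le> n"
    using satisfying_perm_reach_bounds assms by blast+
  then show ?thesis
    by (simp add: slack_def abs_le_iff)
qed

lemma d_linf_ge_entry:
  assumes "j \<in> {1..n}"
  shows "\<bar>int (\<sigma> j) - int (\<rho> j)\<bar> \<le> d_linf n \<sigma> \<rho>"
  using assms unfolding d_linf_def by (intro Max_ge) auto

lemma satisfying_perms_d_linf_le:
  assumes "\<sigma> \<in> satisfying_perms n E" "\<rho> \<in> satisfying_perms n E"
  shows "d_linf n \<sigma> \<rho> \<le> Max (slack n E ` {1..n})"
proof (cases "n = 0")
  case True
  then show ?thesis by (simp add: d_linf_def)
next
  case False
  have "\<bar>int (\<sigma> j) - int (\<rho> j)\<bar> \<le> Max (slack n E ` {1..n})" if j: "j \<in> {1..n}" for j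
  proof -
    note satisfying_perms_position_diff_le[OF assms j]
    also have "slack n E j \<le> Max (slack n E ` {1..n})"
      using j by (intro Max_ge) auto
    finally show ?thesis .
  qed
  then show ?thesis
    using False unfolding d_linf_def by (intro Max.boundedI) auto
qed

lemma ex_satisfying_perm_closed_set_lowest:
  assumes acyc: "acyclic E" and E: "E \<subseteq> {1..n} \<times> {1..n}" and A: "A \<subseteq> {1..n}"
    and closed: "\<And>u v. (u, v) \<in> E \<Longrightarrow> u \<in> A \<Longrightarrow> v \<in> A"
  shows "\<exists>\<sigma>\<in>satisfying_perms n E. \<sigma> ` A = {1..card A}"
proof -
  define B where "B = {1..n} - A"
  have fin: "finite A" "finite B"
    using A by (auto simp: B_def intro: finite_subset)
  have card_B: "card B = n - card A" "card A \<le> n"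
    using A card_mono[OF _ A] by (simp_all add: B_def card_Diff_subset fin(1))
  obtain f where f: "bij_betw f A {0+1..0 + card A}"
      "\<forall>u\<in>A. \<forall>v\<in>A. (u, v) \<in> E \<longrightarrow> f v < f u"
    using acyclic_linear_extension[OF fin(1) acyc] by blast
  obtain g where g: "bij_betw g B {card A + 1..card A + card B}"
      "\<forall>u\<in>B. \<forall>v\<in>B. (u, v) \<in> E \<longrightarrow> g v < g u"
    using acyclic_linear_extension[OF fin(2) acyc] by blast
  define \<sigma> where "\<sigma> x = (if x \<in> A then f x else if x \<in> B then g x else x)" for x
  have "bij_betw f A {1..card A}"
    using f(1) by simp
  then have bij_A: "bij_betw \<sigma> A {1..card A}"
    by (rule bij_betw_cong[THEN iffD1, rotated]) (auto simp: \<sigma>_def)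
  have "bij_betw \<sigma> B {card A + 1..card A + card B}"
    using g(1) by (rule bij_betw_cong[THEN iffD1, rotated]) (auto simp: \<sigma>_def B_def)
  then have bij_B: "bij_betw \<sigma> B {card A + 1..n}"
    using card_B by simp
  have "bij_betw \<sigma> (A \<union> B) ({1..card A} \<union> {card A + 1..n})"
    by (rule bij_betw_combine[OF bij_A bij_B]) auto
  moreover have "A \<union> B = {1..n}" "{1..card A} \<union> {card A + 1..n} = {1..n}"
    using A card_B by (auto simp: B_def)
  ultimately have "bij_betw \<sigma> {1..n} {1..n}"
    by simp
  then have perm: "\<sigma> permutes {1..n}"
    by (rule bij_imp_permutes) (use A in \<open>auto simp: \<sigma>_def B_def\<close>)
  have "\<sigma> v < \<sigma> u" if uv: "(u, v) \<in> E" for u v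
  proof -
    have "u \<in> A \<union> B" "v \<in> A \<union> B"
      using uv E A by (auto simp: B_def)
    then consider "u \<in> A" "v \<in> A" | "u \<in> B" "v \<in> A" | "u \<in> B" "v \<in> B"
      using closed[OF uv] by blast
    then show ?thesis
    proof cases
      case 1
      then show ?thesis using f(2) uv by (simp add: \<sigma>_def)
    next
      case 2
      then have "\<sigma> v \<in> {1..card A}" "\<sigma> u \<in> {card A + 1..n}"
        using bij_A bij_B bij_betwE by blast+
      then show ?thesis by simp
    next
      case 3
      then show ?thesis using g(2) uv by (simp add: \<sigma>_def B_def)
    qed
  qed
  with perm have "\<sigma> \<in> satisfying_perms n E"
    by (auto simp: satisfying_perms_def)
  with bij_betw_imp_surj_on[OF bij_A] show ?thesis by blast
qed

lemma ex_satisfying_perm_lowest_position: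
  assumes acyc: "acyclic E" and E: "E \<subseteq> {1..n} \<times> {1..n}" and i: "i \<in> {1..n}"
  shows "\<exists>\<sigma>\<in>satisfying_perms n E. \<sigma> i = card (reach n E i) + 1"
proof -
  let ?A = "insert i (reach n E i)"
  have closed: "v \<in> ?A" if "(u, v) \<in> E" "u \<in> ?A" for u v
  proof -
    have "(i, v) \<in> E\<^sup>+" "v \<in> {1..n}"
      using that E by (auto simp: reach_def)
    moreover have "v \<noteq> i"
      using acyc \<open>(i, v) \<in> E\<^sup>+\<close> by (auto simp: acyclic_def)
    ultimately show ?thesis by (simp add: reach_def)
  qed
  have "?A \<subseteq> {1..n}"
    using i unfolding reach_def by blast
  then obtain \<sigma> where \<sigma>: "\<sigma> \<in> satisfying_perms n E" "\<sigma> ` ?A = {1..card ?A}"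
    using ex_satisfying_perm_closed_set_lowest[of E n ?A] acyc E closed by blast
  have "finite (reach n E i)"
    unfolding reach_def by (rule finite_subset[of _ "{1..n}"]) auto
  then have "card ?A = card (reach n E i) + 1"
    by (simp add: reach_def)
  then have "\<sigma> i \<le> card (reach n E i) + 1"
    using \<sigma>(2) by (metis atLeastAtMost_iff image_eqI insertI1)
  then show ?thesis
    using satisfying_perm_reach_bounds(1)[OF \<sigma>(1) i] \<sigma>(1) by (intro bexI) auto
qed

lemma ex_satisfying_perm_highest_position:
  assumes acyc: "acyclic E" and E: "E \<subseteq> {1..n} \<times> {1..n}" and i: "i \<in> {1..n}"
  shows "\<exists>\<sigma>\<in>satisfying_perms n E. \<sigma> i + card (reach_inv n E i) = n"
proof -
  let ?R = "insert i (reach_inv n E i)"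
  let ?A = "{1..n} - ?R"
  have closed: "v \<in> ?A" if "(u, v) \<in> E" "u \<in> ?A" for u v
  proof (rule ccontr)
    assume "v \<notin> ?A"
    moreover have "v \<in> {1..n}"
      using that(1) E by blast
    ultimately have "v = i \<or> (v, i) \<in> E\<^sup>+"
      unfolding reach_inv_def by blast
    then have "(u, i) \<in> E\<^sup>+"
      using that(1) by (metis r_into_trancl' trancl_into_trancl2)
    then show False
      using that(2) unfolding reach_inv_def by blast
  qed
  obtain \<sigma> where \<sigma>: "\<sigma> \<in> satisfying_perms n E" "\<sigma> ` ?A = {1..card ?A}"
    using ex_satisfying_perm_closed_set_lowest[of E n ?A] acyc E closed by blast
  have "?R \<subseteq> {1..n}" "i \<notin> reach_inv n E i"
    using i unfolding reach_inv_def by blast+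
  moreover have "finite (reach_inv n E i)"
    unfolding reach_inv_def by (rule finite_subset[of _ "{1..n}"]) auto
  ultimately have card_A: "card ?A = n - (card (reach_inv n E i) + 1)"
    by (simp add: card_Diff_subset)
  have perm: "\<sigma> permutes {1..n}"
    using \<sigma>(1) by (simp add: satisfying_perms_def)
  have "\<sigma> i \<notin> \<sigma> ` ?A"
    by (simp add: inj_image_mem_iff[OF permutes_inj[OF perm]])
  moreover have "\<sigma> i \<in> {1..n}"
    using i by (simp only: permutes_in_image[OF perm])
  ultimately have "n \<le> \<sigma> i + card (reach_inv n E i)"
    unfolding \<sigma>(2) card_A by simp
  then show ?thesis
    using satisfying_perm_reach_bounds(2)[OF \<sigma>(1) i] \<sigma>(1) by (intro bexI) auto
qed

lemma ex_satisfying_perms_position_diff_eq: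
  assumes "acyclic E" "E \<subseteq> {1..n} \<times> {1..n}" "i \<in> {1..n}"
  shows "\<exists>\<sigma>\<in>satisfying_perms n E. \<exists>\<rho>\<in>satisfying_perms n E.
    \<bar>int (\<sigma> i) - int (\<rho> i)\<bar> = slack n E i"
proof -
  obtain \<sigma> \<rho> where \<sigma>: "\<sigma> \<in> satisfying_perms n E" "\<sigma> i = card (reach n E i) + 1"
    and \<rho>: "\<rho> \<in> satisfying_perms n E" "\<rho> i + card (reach_inv n E i) = n"
    using ex_satisfying_perm_lowest_position ex_satisfying_perm_highest_position assms by metis
  have "\<sigma> i + card (reach_inv n E i) \<le> n"
    using satisfying_perm_reach_bounds(2)[OF \<sigma>(1) assms(3)] .
  with \<sigma> \<rho> show ?thesis
    by (intro bexI[of _ \<sigma>] bexI[of _ \<rho>]) (auto simp: slack_def)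
qed

theorem mainTheorem5:
  fixes n :: nat and E :: "(nat \<times> nat) set"
  assumes "oriented_graph n E"
    and "card (satisfying_perms n E) \<ge> 2"
  shows "\<exists>\<sigma> \<in> satisfying_perms n E. \<exists>\<rho> \<in> satisfying_perms n E.
           d_linf n \<sigma> \<rho> =
           Max ((\<lambda>i. int n - int (card (reach n E i)) - int (card (reach_inv n E i)) - 1) ` {1..n})"
proof -
  have slack_eq: "(\<lambda>i. int n - int (card (reach n E i)) - int (card (reach_inv n E i)) - 1) =
    slack n E"
    by (simp add: slack_def fun_eq_iff)
  obtain \<sigma>\<^sub>0 where \<sigma>\<^sub>0: "\<sigma>\<^sub>0 \<in> satisfying_perms n E"
    using assms(2) by (metis card.empty ex_in_conv not_numeral_le_zero)
  have "\<exists>\<sigma>\<in>satisfying_perms n E. \<exists>\<rho>\<in>satisfying_perms n E. d_linf n \<sigma> \<rho> = Max (slack n E ` {1..n})"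
  proof (cases "n = 0")
    case True
    then show ?thesis using \<sigma>\<^sub>0 by (auto simp: d_linf_def)
  next
    case False
    obtain i where i: "i \<in> {1..n}" "slack n E i = Max (slack n E ` {1..n})"
      using False Max_in[of "slack n E ` {1..n}"] by fastforce
    have "acyclic E" "E \<subseteq> {1..n} \<times> {1..n}"
      using satisfying_perm_imp_acyclic[OF \<sigma>\<^sub>0] assms(1) by (auto simp: oriented_graph_def)
    then obtain \<sigma> \<rho> where \<sigma>\<rho>: "\<sigma> \<in> satisfying_perms n E" "\<rho> \<in> satisfying_perms n E"
        "\<bar>int (\<sigma> i) - int (\<rho> i)\<bar> = slack n E i"
      using ex_satisfying_perms_position_diff_eq[OF _ _ i(1)] by blast
    have "d_linf n \<sigma> \<rho> = Max (slack n E ` {1..n})"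
      using d_linf_ge_entry[OF i(1), of \<sigma> \<rho>] \<sigma>\<rho>(3) i(2)
        satisfying_perms_d_linf_le[OF \<sigma>\<rho>(1,2)] by linarith
    with \<sigma>\<rho>(1,2) show ?thesis by blast
  qed
  then show ?thesis
    unfolding slack_eq .
qed

end
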